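(* Under the saturation assumption below, each of the quantities $A_1=\sum_{\mathcal I\in\overline{\mathbb I}^*}\overline E_{\mathcal I}$, $A_2=1+\sum_{\mathcal I\in\mathbb I}T_{\mathcal I}$, $B_1=\sum_{\mathcal I\in\mathbb I^*}E_{\mathcal I}$, $B_2=1+\sum_{\mathcal I\in\overline{\mathbb I}}\overline T_{\mathcal I}$, $C_1=\sum_{\mathcal I\in\mathbb I^{-*}}E_{\mathcal I}$ (viewed as functions of $\delta\in(0,\bar\delta]$) can be written as $P(\delta)/D(\delta)$, where $P$ and $D$ are polynomials in $\delta$, $D$ is a finite product of factors of the form $|\alpha_{\mathcal E(\mathcal I)}|-|\alpha_{\mathcal I}|$ ($\mathcal I\in\mathbb I$) or $|\alpha_{\overline{\mathcal E}(\mathcal I)}|-|\alpha_{\mathcal I}|$ ($\mathcal I\in\overline{\mathbb I}$), and the constant term of $P$ is positive, i.e. $P(0)>0$.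
   Context: A matching model: finite connected simple graph $\mathcal G=(\mathcal V,\xi)$, $\mathcal V=\{1,\dots,n\}$, arrival distribution $\alpha$ on $\mathcal V$; FCFS policy (an arriving item of class $i$ is matched with the oldest present item whose class is a neighbour of $i$, otherwise it waits). $\mathcal E(i)$ is the neighbour set of $i$ in $\mathcal G$, $\mathcal E(V)=\bigcup_{i\in V}\mathcal E(i)$, $|\alpha_V|=\sum_{i\in V}\alpha_i$. An independent set is a non-empty set of pairwise non-adjacent nodes; $\mathbb I$ is the set of independent sets of $\mathcal G$. Fix distinct non-adjacent nodes $i^*,j^*$; $\overline{\mathcal G}$ is $\mathcal G$ with edge $\{i^*,j^*\}$ added, with neighbourhood map $\overline{\mathcal E}$ and set of independent sets $\overline{\mathbb I}$. $\mathbb I^*=\{\mathcal I\in\mathbb I: i^*\in\mathcal I\text{ or }j^*\in\mathcal I\}$, $\mathbb I^{-*}=\mathbb I\setminus\mathbb I^*$, $\overline{\mathbb I}^*=\{\mathcal I\in\overline{\mathbb I}: i^*\in\mathcal I\text{ or }j^*\in\mathcal I\}$. For $\mathcal I\in\mathbb I$ and an ordering $(i_1,\dots,i_m)$ of $\mathcal I$, with $\mathcal I_k=\{i_1,\dots,i_k\}$, set $T_{(i_1,\dots,i_m)}=\prod_{k=1}^m\frac{\alpha_{i_k}}{|\alpha_{\mathcal E(\mathcal I_k)}|-|\alpha_{\mathcal I_k}|}$ and $E_{(i_1,\dots,i_m)}=\sum_{l=1}^m\frac{|\alpha_{\mathcal E(\mathcal I_l)}|}{|\alpha_{\mathcal E(\mathcal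 I_l)}|-|\alpha_{\mathcal I_l}|}T_{(i_1,\dots,i_m)}$; $T_{\mathcal I}$, $E_{\mathcal I}$ are the sums over all orderings of $\mathcal I$. $\overline T_{\mathcal I},\overline E_{\mathcal I}$ ($\mathcal I\in\overline{\mathbb I}$) are defined identically with $\mathcal E$ replaced by $\overline{\mathcal E}$. Saturation assumption: $\alpha_i=a_i+b_i\delta$ with constants $a_i>0$, $b_i\in\mathbb R$, such that for all $\delta\in(0,\bar\delta]$ (some $\bar\delta>0$) $\alpha$ is a probability distribution satisfying the stability condition $|\alpha_{\mathcal I}|<|\alpha_{\mathcal E(\mathcal I)}|$ for all $\mathcal I\in\mathbb I$; moreover $\sum_{i\in\mathcal E(\hat{\mathcal I})}a_i-\sum_{i\in\hat{\mathcal I}}a_i=0$ for exactly one independent set $\hat{\mathcal I}\in\mathbb I$ (called saturated). *)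

theory Defs
  imports Complex_Main "HOL-Computational_Algebra.Polynomial" "HOL-Combinatorics.Multiset_Permutations"
begin

definition simple_graph :: "nat set \<Rightarrow> (nat \<Rightarrow> nat \<Rightarrow> bool) \<Rightarrow> bool" where
  "simple_graph V G \<longleftrightarrow> finite V \<and> V \<noteq> {} \<and>
     (\<forall>i j. G i j \<longrightarrow> i \<in> V \<and> j \<in> V) \<and> (\<forall>i j. G i j \<longrightarrow> G j i) \<and> (\<forall>i. \<not> G i i)"

definition graph_connected :: "nat set \<Rightarrow> (nat \<Rightarrow> nat \<Rightarrow> bool) \<Rightarrow> bool" where
  "graph_connected V G \<longleftrightarrow> (\<forall>i\<in>V. \<forall>j\<in>V. (i, j) \<in> {(x, y). G x y}\<^sup>*)"

definition add_edge :: "(nat \<Rightarrow> nat \<Rightarrow> bool) \<Rightarrow> nat \<Rightarrow> nat \<Rightarrow> nat \<Rightarrow> nat \<Rightarrow> bool" where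
  "add_edge G i j = (\<lambda>x y. G x y \<or> (x = i \<and> y = j) \<or> (x = j \<and> y = i))"

definition nbrs :: "(nat \<Rightarrow> nat \<Rightarrow> bool) \<Rightarrow> nat set \<Rightarrow> nat set" where
  "nbrs G S = (\<Union>i\<in>S. {j. G i j})"

definition indep_sets :: "nat set \<Rightarrow> (nat \<Rightarrow> nat \<Rightarrow> bool) \<Rightarrow> nat set set" where
  "indep_sets V G = {S. S \<noteq> {} \<and> S \<subseteq> V \<and> (\<forall>i\<in>S. \<forall>j\<in>S. \<not> G i j)}"

definition msum :: "(nat \<Rightarrow> real) \<Rightarrow> nat set \<Rightarrow> real" where
  "msum \<alpha> S = (\<Sum>i\<in>S. \<alpha> i)"

definition T_ord :: "(nat \<Rightarrow> nat \<Rightarrow> bool) \<Rightarrow> (nat \<Rightarrow> real) \<Rightarrow> nat list \<Rightarrow> real" where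
  "T_ord G \<alpha> xs = (\<Prod>k=1..length xs.
      \<alpha> (xs ! (k - 1)) / (msum \<alpha> (nbrs G (set (take k xs))) - msum \<alpha> (set (take k xs))))"

definition E_ord :: "(nat \<Rightarrow> nat \<Rightarrow> bool) \<Rightarrow> (nat \<Rightarrow> real) \<Rightarrow> nat list \<Rightarrow> real" where
  "E_ord G \<alpha> xs = (\<Sum>l=1..length xs.
      msum \<alpha> (nbrs G (set (take l xs))) /
        (msum \<alpha> (nbrs G (set (take l xs))) - msum \<alpha> (set (take l xs)))) * T_ord G \<alpha> xs"

definition T_set :: "(nat \<Rightarrow> nat \<Rightarrow> bool) \<Rightarrow> (nat \<Rightarrow> real) \<Rightarrow> nat set \<Rightarrow> real" where
  "T_set G \<alpha> I = (\<Sum>xs\<in>permutations_of_set I. T_ord G \<alpha> xs)"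

definition E_set :: "(nat \<Rightarrow> nat \<Rightarrow> bool) \<Rightarrow> (nat \<Rightarrow> real) \<Rightarrow> nat set \<Rightarrow> real" where
  "E_set G \<alpha> I = (\<Sum>xs\<in>permutations_of_set I. E_ord G \<alpha> xs)"

(* the polynomial in \<delta>:  |\<alpha>_{\<E>(I)}| - |\<alpha>_I|  with \<alpha>_i = a_i + b_i \<delta> *)
definition gap_poly :: "(nat \<Rightarrow> real) \<Rightarrow> (nat \<Rightarrow> real) \<Rightarrow> (nat \<Rightarrow> nat \<Rightarrow> bool) \<Rightarrow> nat set \<Rightarrow> real poly" where
  "gap_poly a b G I = (\<Sum>i\<in>nbrs G I. [:a i, b i:]) - (\<Sum>i\<in>I. [:a i, b i:])"

definition rational_form ::
  "(real \<Rightarrow> real) \<Rightarrow> real \<Rightarrow> real poly set \<Rightarrow> bool" where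
  "rational_form Q dbar factors \<longleftrightarrow>
     (\<exists>P D fs. (\<forall>\<delta>\<in>{0<..dbar}. Q \<delta> = poly P \<delta> / poly D \<delta>) \<and>
        D = prod_list fs \<and> set fs \<subseteq> factors \<and> poly P 0 > 0)"

end

theory Submission
  imports Defs
begin

(* Every quantity is built by sums and products from the weights a_i + b_i d and the inverses of
   the gaps |alpha_E(I)| - |alpha_I|, which are linear polynomials in d. Stability makes every gap
   positive on (0, dbar] (for the graph with the extra edge too, since adding an edge only enlarges
   neighbourhoods), so every gap is nonnegative at 0, and only the gap z of the saturated set
   vanishes there: a gap of the enlarged graph vanishing at 0 has the same neighbourhood as in the
   original graph, because a > 0. Hence each quantity is P / (z^k Q) with Q a product of gaps that
   are positive at 0 and P(0) > 0. This shape survives products, and also sums: over the common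
   denominator the numerator at 0 is a positive term plus a multiple of z(0)^m >= 0. *)

locale single_pole =
  fixes z :: "real poly" and F :: "real poly set" and d :: real
  assumes pole_nonzero: "\<And>\<delta>. \<delta> \<in> {0<..d} \<Longrightarrow> poly z \<delta> \<noteq> 0"
    and pole_nonneg_0: "poly z 0 \<ge> 0"
    and factor_nonzero: "\<And>r \<delta>. r \<in> F \<Longrightarrow> \<delta> \<in> {0<..d} \<Longrightarrow> poly r \<delta> \<noteq> 0"
    and factor_pos_0: "\<And>r. r \<in> F \<Longrightarrow> poly r 0 > 0"
begin

definition pos_quotient :: "(real \<Rightarrow> real) \<Rightarrow> bool" where
  "pos_quotient f \<longleftrightarrow> (\<exists>P k R. (\<forall>\<delta>\<in>{0<..d}. f \<delta> = poly P \<delta> / (poly z \<delta> ^ k * poly (prod_list R) \<delta>))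
     \<and> set R \<subseteq> F \<and> poly P 0 > 0)"

lemma prod_list_factors_nonzero: "set R \<subseteq> F \<Longrightarrow> \<delta> \<in> {0<..d} \<Longrightarrow> poly (prod_list R) \<delta> \<noteq> 0"
  by (induction R) (auto simp: factor_nonzero)

lemma prod_list_factors_pos_0: "set R \<subseteq> F \<Longrightarrow> poly (prod_list R) 0 > 0"
  by (induction R) (auto simp: factor_pos_0)

lemma pos_quotient_cong: "pos_quotient f \<Longrightarrow> (\<And>\<delta>. \<delta> \<in> {0<..d} \<Longrightarrow> f \<delta> = g \<delta>) \<Longrightarrow> pos_quotient g"
  unfolding pos_quotient_def by metis

lemma pos_quotient_poly: "poly p 0 > 0 \<Longrightarrow> pos_quotient (poly p)"
  unfolding pos_quotient_def by (rule exI[of _ p], rule exI[of _ 0], rule exI[of _ "[]"]) simp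

lemma pos_quotient_const: "c > 0 \<Longrightarrow> pos_quotient (\<lambda>_. c)"
  by (rule pos_quotient_cong[OF pos_quotient_poly[of "[:c:]"]]) simp_all

lemma pos_quotient_inverse_factor: "r \<in> F \<Longrightarrow> pos_quotient (\<lambda>\<delta>. 1 / poly r \<delta>)"
  unfolding pos_quotient_def by (rule exI[of _ 1], rule exI[of _ 0], rule exI[of _ "[r]"]) simp

lemma pos_quotient_inverse_pole: "pos_quotient (\<lambda>\<delta>. 1 / poly z \<delta>)"
  unfolding pos_quotient_def by (rule exI[of _ 1], rule exI[of _ 1], rule exI[of _ "[]"]) simp

lemma pos_quotient_mult:
  assumes "pos_quotient f" "pos_quotient g"
  shows "pos_quotient (\<lambda>\<delta>. f \<delta> * g \<delta>)"
proof -
  obtain P k R where f: "\<forall>\<delta>\<in>{0<..d}. f \<delta> = poly P \<delta> / (poly z \<delta> ^ k * poly (prod_list R) \<delta>)"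
    "set R \<subseteq> F" "poly P 0 > 0" using assms(1) unfolding pos_quotient_def by blast
  obtain Q l S where g: "\<forall>\<delta>\<in>{0<..d}. g \<delta> = poly Q \<delta> / (poly z \<delta> ^ l * poly (prod_list S) \<delta>)"
    "set S \<subseteq> F" "poly Q 0 > 0" using assms(2) unfolding pos_quotient_def by blast
  have "\<forall>\<delta>\<in>{0<..d}. f \<delta> * g \<delta> = poly (P * Q) \<delta> / (poly z \<delta> ^ (k + l) * poly (prod_list (R @ S)) \<delta>)"
    using f(1) g(1) by (simp add: power_add)
  then show ?thesis unfolding pos_quotient_def using f g
    by (intro exI[of _ "P * Q"] exI[of _ "k + l"] exI[of _ "R @ S"]) auto
qed

lemma pos_quotient_add_same_pole:
  assumes f: "\<forall>\<delta>\<in>{0<..d}. f \<delta> = poly P \<delta> / (poly z \<delta> ^ (k + m) * poly (prod_list R) \<delta>)"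
      "set R \<subseteq> F" "poly P 0 > 0"
    and g: "\<forall>\<delta>\<in>{0<..d}. g \<delta> = poly Q \<delta> / (poly z \<delta> ^ k * poly (prod_list S) \<delta>)"
      "set S \<subseteq> F" "poly Q 0 > 0"
  shows "pos_quotient (\<lambda>\<delta>. f \<delta> + g \<delta>)"
  unfolding pos_quotient_def
proof (intro exI conjI)
  show "\<forall>\<delta>\<in>{0<..d}. f \<delta> + g \<delta> = poly (P * prod_list S + Q * z ^ m * prod_list R) \<delta> /
      (poly z \<delta> ^ (k + m) * poly (prod_list (R @ S)) \<delta>)"
  proof
    fix \<delta> assume \<delta>: "\<delta> \<in> {0<..d}"
    have "poly z \<delta> \<noteq> 0" "poly (prod_list R) \<delta> \<noteq> 0" "poly (prod_list S) \<delta> \<noteq> 0"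
      using \<delta> f(2) g(2) pole_nonzero prod_list_factors_nonzero by auto
    then show "f \<delta> + g \<delta> = poly (P * prod_list S + Q * z ^ m * prod_list R) \<delta> /
      (poly z \<delta> ^ (k + m) * poly (prod_list (R @ S)) \<delta>)"
      using \<delta> f(1) g(1) by (simp add: power_add field_simps)
  qed
  have "poly P 0 * poly (prod_list S) 0 > 0" "poly Q 0 * poly z 0 ^ m * poly (prod_list R) 0 \<ge> 0"
    using f(2,3) g(2,3) pole_nonneg_0 prod_list_factors_pos_0 by (simp_all add: less_imp_le)
  then show "poly (P * prod_list S + Q * z ^ m * prod_list R) 0 > 0" by simp
qed (use f g in auto)

lemma pos_quotient_add:
  assumes "pos_quotient f" "pos_quotient g"
  shows "pos_quotient (\<lambda>\<delta>. f \<delta> + g \<delta>)"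
proof -
  obtain P k R where f: "\<forall>\<delta>\<in>{0<..d}. f \<delta> = poly P \<delta> / (poly z \<delta> ^ k * poly (prod_list R) \<delta>)"
    "set R \<subseteq> F" "poly P 0 > 0" using assms(1) unfolding pos_quotient_def by blast
  obtain Q l S where g: "\<forall>\<delta>\<in>{0<..d}. g \<delta> = poly Q \<delta> / (poly z \<delta> ^ l * poly (prod_list S) \<delta>)"
    "set S \<subseteq> F" "poly Q 0 > 0" using assms(2) unfolding pos_quotient_def by blast
  show ?thesis
  proof (cases "l \<le> k")
    case True
    then obtain m where "k = l + m" using le_Suc_ex by blast
    then show ?thesis using pos_quotient_add_same_pole[of f P l m R g Q S] f g by simp
  next
    case False
    then obtain m where "l = k + m" using le_Suc_ex less_imp_le by (metis not_le)
    then have "pos_quotient (\<lambda>\<delta>. g \<delta> + f \<delta>)"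
      using pos_quotient_add_same_pole[of g Q k m S f P R] f g by simp
    then show ?thesis by (simp add: add.commute)
  qed
qed

lemma pos_quotient_prod:
  "finite S \<Longrightarrow> (\<And>k. k \<in> S \<Longrightarrow> pos_quotient (h k)) \<Longrightarrow> pos_quotient (\<lambda>\<delta>. \<Prod>k\<in>S. h k \<delta>)"
  by (induction S rule: finite_induct) (auto intro: pos_quotient_mult pos_quotient_const)

lemma pos_quotient_sum:
  "finite S \<Longrightarrow> S \<noteq> {} \<Longrightarrow> (\<And>k. k \<in> S \<Longrightarrow> pos_quotient (h k)) \<Longrightarrow>
    pos_quotient (\<lambda>\<delta>. \<Sum>k\<in>S. h k \<delta>)"
  by (induction S rule: finite_ne_induct) (auto intro: pos_quotient_add)

lemma rational_form_if_pos_quotient: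
  assumes "pos_quotient f" "z \<in> K" "F \<subseteq> K"
  shows "rational_form f d K"
proof -
  obtain P k R where f: "\<forall>\<delta>\<in>{0<..d}. f \<delta> = poly P \<delta> / (poly z \<delta> ^ k * poly (prod_list R) \<delta>)"
    "set R \<subseteq> F" "poly P 0 > 0" using assms(1) unfolding pos_quotient_def by blast
  have "\<forall>\<delta>\<in>{0<..d}. f \<delta> = poly P \<delta> / poly (prod_list (replicate k z @ R)) \<delta>"
    using f(1) by simp
  moreover have "set (replicate k z @ R) \<subseteq> K" using f(2) assms(2,3) by auto
  ultimately show ?thesis unfolding rational_form_def using f(3) by blast
qed

end

lemma graph_connected_add_edge: "graph_connected V G \<Longrightarrow> graph_connected V (add_edge G i j)"
proof -
  have "{(x, y). G x y}\<^sup>* \<subseteq> {(x, y). add_edge G i j x y}\<^sup>*"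
    by (rule rtrancl_mono) (auto simp: add_edge_def)
  then show "graph_connected V G \<Longrightarrow> graph_connected V (add_edge G i j)"
    unfolding graph_connected_def by blast
qed

lemma nbrs_subset_vertices: "simple_graph V G \<Longrightarrow> nbrs G I \<subseteq> V"
  unfolding simple_graph_def nbrs_def by blast

lemma nbrs_add_edge_subset_vertices: "simple_graph V G \<Longrightarrow> i \<in> V \<Longrightarrow> j \<in> V \<Longrightarrow> nbrs (add_edge G i j) I \<subseteq> V"
  unfolding simple_graph_def nbrs_def add_edge_def by blast

lemma nbrs_add_edge_mono: "nbrs G I \<subseteq> nbrs (add_edge G i j) I"
  unfolding nbrs_def add_edge_def by blast

lemma indep_sets_add_edge_subset: "indep_sets V (add_edge G i j) \<subseteq> indep_sets V G"
  unfolding indep_sets_def add_edge_def by blast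

lemma finite_indep_sets: "finite V \<Longrightarrow> finite (indep_sets V G)"
  by (rule finite_subset[of _ "Pow V"]) (auto simp: indep_sets_def)

lemma singleton_in_indep_sets: "\<not> G i i \<Longrightarrow> i \<in> V \<Longrightarrow> {i} \<in> indep_sets V G"
  unfolding indep_sets_def by auto

lemma exists_neighbour:
  assumes "graph_connected V G" "x \<in> V" "y \<in> V" "x \<noteq> y"
  obtains k where "G x k"
proof -
  have "(x, y) \<in> {(x, y). G x y}\<^sup>*" using assms(1-3) unfolding graph_connected_def by blast
  then show thesis using assms(4) that by (cases rule: converse_rtranclE) auto
qed

lemma nbrs_nonempty:
  assumes "graph_connected V G" "i \<in> V" "j \<in> V" "i \<noteq> j" "I \<in> indep_sets V G"
  shows "nbrs G I \<noteq> {}"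
proof -
  obtain x where x: "x \<in> I" "x \<in> V" using assms(5) unfolding indep_sets_def by blast
  obtain y where "y \<in> V" "x \<noteq> y" using assms(2-4) by metis
  then obtain k where "G x k" using exists_neighbour assms(1) x(2) by metis
  then show ?thesis using x(1) unfolding nbrs_def by blast
qed

lemma prefix_in_indep_sets:
  assumes "xs \<in> permutations_of_set I" "I \<in> indep_sets V H" "k \<in> {1..length xs}"
  shows "set (take k xs) \<in> indep_sets V H"
proof -
  have "set (take k xs) \<subseteq> I" using permutations_of_setD(1)[OF assms(1)] set_take_subset by metis
  moreover have "set (take k xs) \<noteq> {}" using assms(3) by auto
  ultimately show ?thesis using assms(2) unfolding indep_sets_def by blast
qed

lemma nth_permutation_in_vertices:
  assumes "xs \<in> permutations_of_set I" "I \<in> indep_sets V H" "k \<in> {1..length xs}"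
  shows "xs ! (k - 1) \<in> V"
proof -
  have "xs ! (k - 1) \<in> set xs" using assms(3) by auto
  then show ?thesis using permutations_of_setD(1)[OF assms(1)] assms(2) unfolding indep_sets_def by auto
qed

context single_pole
begin

lemma pos_quotient_divide:
  "pos_quotient f \<Longrightarrow> pos_quotient (\<lambda>\<delta>. 1 / g \<delta>) \<Longrightarrow> pos_quotient (\<lambda>\<delta>. f \<delta> / g \<delta>)"
  using pos_quotient_mult[of f "\<lambda>\<delta>. 1 / g \<delta>"] by simp

lemma pos_quotient_msum:
  "finite S \<Longrightarrow> S \<noteq> {} \<Longrightarrow> (\<And>x. x \<in> S \<Longrightarrow> pos_quotient (\<lambda>\<delta>. \<alpha> \<delta> x)) \<Longrightarrow>
    pos_quotient (\<lambda>\<delta>. msum (\<alpha> \<delta>) S)"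
  unfolding msum_def by (rule pos_quotient_sum)

context
  fixes V :: "nat set" and H :: "nat \<Rightarrow> nat \<Rightarrow> bool" and \<alpha> :: "real \<Rightarrow> nat \<Rightarrow> real"
  assumes finite_vertices: "finite V"
    and weight: "\<And>x. x \<in> V \<Longrightarrow> pos_quotient (\<lambda>\<delta>. \<alpha> \<delta> x)"
    and neighbourhood_vertices: "\<And>J. nbrs H J \<subseteq> V"
    and nonempty_neighbourhood: "\<And>J. J \<in> indep_sets V H \<Longrightarrow> nbrs H J \<noteq> {}"
    and inverse_gap: "\<And>J. J \<in> indep_sets V H \<Longrightarrow>
      pos_quotient (\<lambda>\<delta>. 1 / (msum (\<alpha> \<delta>) (nbrs H J) - msum (\<alpha> \<delta>) J))"
begin

lemma pos_quotient_msum_nbrs: "J \<in> indep_sets V H \<Longrightarrow> pos_quotient (\<lambda>\<delta>. msum (\<alpha> \<delta>) (nbrs H J))"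
  using finite_subset[OF neighbourhood_vertices finite_vertices] neighbourhood_vertices
  by (intro pos_quotient_msum nonempty_neighbourhood weight) auto

lemma pos_quotient_T_ord:
  "I \<in> indep_sets V H \<Longrightarrow> xs \<in> permutations_of_set I \<Longrightarrow> pos_quotient (\<lambda>\<delta>. T_ord H (\<alpha> \<delta>) xs)"
  unfolding T_ord_def
  by (auto simp del: One_nat_def intro!: pos_quotient_prod pos_quotient_divide weight inverse_gap
      nth_permutation_in_vertices prefix_in_indep_sets)

lemma pos_quotient_E_ord:
  assumes "I \<in> indep_sets V H" "xs \<in> permutations_of_set I"
  shows "pos_quotient (\<lambda>\<delta>. E_ord H (\<alpha> \<delta>) xs)"
proof -
  have "length xs \<ge> 1" using assms unfolding indep_sets_def
    by (cases xs) (auto dest: permutations_of_setD)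
  then show ?thesis unfolding E_ord_def using assms
    by (auto simp del: One_nat_def intro!: pos_quotient_mult pos_quotient_sum pos_quotient_divide
        pos_quotient_T_ord pos_quotient_msum_nbrs inverse_gap prefix_in_indep_sets)
qed

lemma finite_indep_set_member: "I \<in> indep_sets V H \<Longrightarrow> finite I"
  using finite_vertices unfolding indep_sets_def by (auto intro: finite_subset)

lemma pos_quotient_T_set: "I \<in> indep_sets V H \<Longrightarrow> pos_quotient (\<lambda>\<delta>. T_set H (\<alpha> \<delta>) I)"
  unfolding T_set_def
  by (auto intro!: pos_quotient_sum pos_quotient_T_ord dest: finite_indep_set_member)

lemma pos_quotient_E_set: "I \<in> indep_sets V H \<Longrightarrow> pos_quotient (\<lambda>\<delta>. E_set H (\<alpha> \<delta>) I)"
  unfolding E_set_def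
  by (auto intro!: pos_quotient_sum pos_quotient_E_ord dest: finite_indep_set_member)

lemma pos_quotient_sum_T_set:
  "S \<subseteq> indep_sets V H \<Longrightarrow> S \<noteq> {} \<Longrightarrow> pos_quotient (\<lambda>\<delta>. \<Sum>I\<in>S. T_set H (\<alpha> \<delta>) I)"
  using finite_subset finite_indep_sets[OF finite_vertices]
  by (intro pos_quotient_sum pos_quotient_T_set) auto

lemma pos_quotient_sum_E_set:
  "S \<subseteq> indep_sets V H \<Longrightarrow> S \<noteq> {} \<Longrightarrow> pos_quotient (\<lambda>\<delta>. \<Sum>I\<in>S. E_set H (\<alpha> \<delta>) I)"
  using finite_subset finite_indep_sets[OF finite_vertices]
  by (intro pos_quotient_sum pos_quotient_E_set) auto

end

end

definition gap_factors ::
  "(nat \<Rightarrow> real) \<Rightarrow> (nat \<Rightarrow> real) \<Rightarrow> nat set \<Rightarrow> (nat \<Rightarrow> nat \<Rightarrow> bool) \<Rightarrow> nat \<Rightarrow> nat \<Rightarrow> real poly set"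
where
  "gap_factors a b V G i j = {gap_poly a b G I | I. I \<in> indep_sets V G} \<union>
     {gap_poly a b (add_edge G i j) I | I. I \<in> indep_sets V (add_edge G i j)}"

lemma poly_gap_poly:
  "poly (gap_poly a b G I) \<delta> = msum (\<lambda>i. a i + b i * \<delta>) (nbrs G I) - msum (\<lambda>i. a i + b i * \<delta>) I"
  by (simp add: gap_poly_def msum_def poly_sum mult.commute)

lemma poly_gap_poly_0: "poly (gap_poly a b G I) 0 = msum a (nbrs G I) - msum a I"
  by (simp add: poly_gap_poly)

lemma poly_nonneg_0_if_pos_right:
  fixes p :: "real poly"
  assumes "d > 0" "\<And>\<delta>. \<delta> \<in> {0<..d} \<Longrightarrow> poly p \<delta> > 0"
  shows "poly p 0 \<ge> 0"
proof (rule tendsto_lowerbound)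
  show "(poly p \<longlongrightarrow> poly p 0) (at_right 0)"
    using continuous_within_poly[of 0 "{0<..}" p] by (simp add: continuous_within)
  show "\<forall>\<^sub>F \<delta> in at_right 0. 0 \<le> poly p \<delta>"
    using eventually_at_right_real[OF assms(1)] by eventually_elim (use assms(2) in force)
qed (rule trivial_limit_at_right_real)

lemma gap_poly_add_edge_ge:
  assumes "simple_graph V G" "i \<in> V" "j \<in> V" "\<And>x. x \<in> V \<Longrightarrow> a x + b x * \<delta> \<ge> 0"
  shows "poly (gap_poly a b G I) \<delta> \<le> poly (gap_poly a b (add_edge G i j) I) \<delta>"
proof -
  have sub: "nbrs (add_edge G i j) I \<subseteq> V" using nbrs_add_edge_subset_vertices[OF assms(1-3)] .
  then have "finite (nbrs (add_edge G i j) I)"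
    using assms(1) unfolding simple_graph_def by (metis finite_subset)
  then have "msum (\<lambda>i. a i + b i * \<delta>) (nbrs G I) \<le> msum (\<lambda>i. a i + b i * \<delta>) (nbrs (add_edge G i j) I)"
    unfolding msum_def
  proof (rule sum_mono2)
    fix x assume "x \<in> nbrs (add_edge G i j) I - nbrs G I"
    then show "0 \<le> a x + b x * \<delta>" using sub assms(4) by blast
  qed (rule nbrs_add_edge_mono)
  then show ?thesis by (simp add: poly_gap_poly)
qed

lemma gap_poly_add_edge_eq_or_gt_0:
  assumes "simple_graph V G" "i \<in> V" "j \<in> V" "\<And>x. x \<in> V \<Longrightarrow> a x > 0"
  shows "gap_poly a b (add_edge G i j) I = gap_poly a b G I \<or>
    poly (gap_poly a b G I) 0 < poly (gap_poly a b (add_edge G i j) I) 0"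
proof (cases "nbrs (add_edge G i j) I = nbrs G I")
  case True
  then show ?thesis by (simp add: gap_poly_def)
next
  case False
  then obtain x where x: "x \<in> nbrs (add_edge G i j) I - nbrs G I" using nbrs_add_edge_mono by blast
  have sub: "nbrs (add_edge G i j) I \<subseteq> V" using nbrs_add_edge_subset_vertices[OF assms(1-3)] .
  then have "finite (nbrs (add_edge G i j) I)"
    using assms(1) unfolding simple_graph_def by (metis finite_subset)
  then have "msum a (nbrs G I) < msum a (nbrs (add_edge G i j) I)"
    unfolding msum_def
    by (rule sum_strict_mono2[OF _ nbrs_add_edge_mono x]) (use sub assms(4) x in \<open>auto intro: less_imp_le\<close>)
  then show ?thesis by (simp add: poly_gap_poly_0)
qed

lemma gap_factors_pos:
  assumes "simple_graph V G" "i \<in> V" "j \<in> V" "\<And>x. x \<in> V \<Longrightarrow> a x + b x * \<delta> \<ge> 0"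
    and stable: "\<And>I. I \<in> indep_sets V G \<Longrightarrow> poly (gap_poly a b G I) \<delta> > 0"
    and "p \<in> gap_factors a b V G i j"
  shows "poly p \<delta> > 0"
  using assms(6) unfolding gap_factors_def
proof (elim UnE CollectE exE conjE)
  fix I assume p: "p = gap_poly a b (add_edge G i j) I" and I: "I \<in> indep_sets V (add_edge G i j)"
  then have "poly (gap_poly a b G I) \<delta> > 0" using stable indep_sets_add_edge_subset by blast
  moreover have "poly (gap_poly a b G I) \<delta> \<le> poly (gap_poly a b (add_edge G i j) I) \<delta>"
    by (rule gap_poly_add_edge_ge[OF assms(1-3)]) (rule assms(4))
  ultimately show ?thesis using p by simp
qed (use stable in blast)

lemma gap_factors_pos_0_or_saturated:
  assumes "simple_graph V G" "i \<in> V" "j \<in> V" "\<And>x. x \<in> V \<Longrightarrow> a x > 0"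
    and nonneg_0: "\<And>I. I \<in> indep_sets V G \<Longrightarrow> poly (gap_poly a b G I) 0 \<ge> 0"
    and saturated: "\<And>I. I \<in> indep_sets V G \<Longrightarrow> poly (gap_poly a b G I) 0 = 0 \<Longrightarrow> I = Is"
    and "p \<in> gap_factors a b V G i j"
  shows "poly p 0 > 0 \<or> p = gap_poly a b G Is"
proof -
  have G_case: "poly (gap_poly a b G I) 0 > 0 \<or> gap_poly a b G I = gap_poly a b G Is"
    if "I \<in> indep_sets V G" for I
    using nonneg_0[OF that] saturated[OF that] by (cases "poly (gap_poly a b G I) 0 = 0") auto
  from assms(7) show ?thesis
    unfolding gap_factors_def
  proof (elim UnE CollectE exE conjE)
    fix I assume "p = gap_poly a b G I" "I \<in> indep_sets V G"
    then show ?thesis using G_case by auto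
  next
    fix I assume p: "p = gap_poly a b (add_edge G i j) I" and I: "I \<in> indep_sets V (add_edge G i j)"
    then have I_G: "I \<in> indep_sets V G" using indep_sets_add_edge_subset by blast
    have "gap_poly a b (add_edge G i j) I = gap_poly a b G I \<or>
        poly (gap_poly a b G I) 0 < poly (gap_poly a b (add_edge G i j) I) 0"
      by (rule gap_poly_add_edge_eq_or_gt_0[OF assms(1-3)]) (rule assms(4))
    then show ?thesis using p G_case[OF I_G] nonneg_0[OF I_G] by auto
  qed
qed

lemma single_pole_gap_factors:
  assumes graph: "simple_graph V G" and ij: "i \<in> V" "j \<in> V"
    and a_pos: "\<And>x. x \<in> V \<Longrightarrow> a x > 0" and "d > 0"
    and nonneg: "\<And>\<delta> x. \<delta> \<in> {0<..d} \<Longrightarrow> x \<in> V \<Longrightarrow> a x + b x * \<delta> \<ge> 0"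
    and stable: "\<And>\<delta> I. \<delta> \<in> {0<..d} \<Longrightarrow> I \<in> indep_sets V G \<Longrightarrow> poly (gap_poly a b G I) \<delta> > 0"
    and Is: "Is \<in> indep_sets V G"
    and saturated: "\<And>I. I \<in> indep_sets V G \<Longrightarrow> poly (gap_poly a b G I) 0 = 0 \<Longrightarrow> I = Is"
  defines "K \<equiv> gap_factors a b V G i j"
  shows "single_pole (gap_poly a b G Is) {p \<in> K. poly p 0 > 0} d"
    and "p \<in> K \<Longrightarrow> poly p 0 > 0 \<or> p = gap_poly a b G Is"
proof -
  have pos: "poly p \<delta> > 0" if "p \<in> K" "\<delta> \<in> {0<..d}" for p \<delta>
    by (rule gap_factors_pos[OF graph ij]) (use nonneg stable that in \<open>auto simp: K_def\<close>)
  then have nonneg_0: "poly p 0 \<ge> 0" if "p \<in> K" for p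
    using poly_nonneg_0_if_pos_right[OF \<open>d > 0\<close>] that by blast
  show "p \<in> K \<Longrightarrow> poly p 0 > 0 \<or> p = gap_poly a b G Is"
    by (rule gap_factors_pos_0_or_saturated[OF graph ij])
      (use a_pos nonneg_0 saturated in \<open>auto simp: K_def gap_factors_def\<close>)
  have "gap_poly a b G Is \<in> K" using Is by (auto simp: K_def gap_factors_def)
  then show "single_pole (gap_poly a b G Is) {p \<in> K. poly p 0 > 0} d"
    by unfold_locales (use pos nonneg_0 in fastforce)+
qed

theorem mainTheorem6:
  fixes n :: nat and G :: "nat \<Rightarrow> nat \<Rightarrow> bool" and a b :: "nat \<Rightarrow> real"
    and dbar :: real and istar jstar :: nat
  assumes graph: "simple_graph {1..n} G"
    and conn: "graph_connected {1..n} G"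
    and ij: "istar \<in> {1..n}" "jstar \<in> {1..n}" "istar \<noteq> jstar" "\<not> G istar jstar"
    and a_pos: "\<forall>i\<in>{1..n}. a i > 0"
    and dbar_pos: "dbar > 0"
    and distr: "\<forall>\<delta>\<in>{0<..dbar}. (\<forall>i\<in>{1..n}. a i + b i * \<delta> \<ge> 0) \<and>
                  (\<Sum>i\<in>{1..n}. a i + b i * \<delta>) = 1"
    and stable: "\<forall>\<delta>\<in>{0<..dbar}. \<forall>I\<in>indep_sets {1..n} G.
                  msum (\<lambda>i. a i + b i * \<delta>) I < msum (\<lambda>i. a i + b i * \<delta>) (nbrs G I)"
    and saturated: "\<exists>!I. I \<in> indep_sets {1..n} G \<and> msum a (nbrs G I) - msum a I = 0"
  shows
   "let \<alpha> = (\<lambda>\<delta> i. a i + b i * \<delta>);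
        G' = add_edge G istar jstar;
        II = indep_sets {1..n} G;
        II' = indep_sets {1..n} G';
        factors = {gap_poly a b G I | I. I \<in> II} \<union> {gap_poly a b G' I | I. I \<in> II'};
        A1 = (\<lambda>\<delta>. \<Sum>I\<in>{I\<in>II'. istar \<in> I \<or> jstar \<in> I}. E_set G' (\<alpha> \<delta>) I);
        A2 = (\<lambda>\<delta>. 1 + (\<Sum>I\<in>II. T_set G (\<alpha> \<delta>) I));
        B1 = (\<lambda>\<delta>. \<Sum>I\<in>{I\<in>II. istar \<in> I \<or> jstar \<in> I}. E_set G (\<alpha> \<delta>) I);
        B2 = (\<lambda>\<delta>. 1 + (\<Sum>I\<in>II'. T_set G' (\<alpha> \<delta>) I));
        C1 = (\<lambda>\<delta>. \<Sum>I\<in>{I\<in>II. \<not> (istar \<in> I \<or> jstar \<in> I)}. E_set G (\<alpha> \<delta>) I)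
    in rational_form A1 dbar factors \<and> rational_form A2 dbar factors \<and>
       rational_form B1 dbar factors \<and> rational_form B2 dbar factors \<and>
       rational_form C1 dbar factors"
proof -
  define G' where "G' = add_edge G istar jstar"
  define K where "K = gap_factors a b {1..n} G istar jstar"
  obtain Is where Is: "Is \<in> indep_sets {1..n} G"
    and Is_unique: "\<And>I. I \<in> indep_sets {1..n} G \<Longrightarrow> poly (gap_poly a b G I) 0 = 0 \<Longrightarrow> I = Is"
    using saturated unfolding poly_gap_poly_0 by blast
  define z where "z = gap_poly a b G Is"
  define F where "F = {p \<in> K. poly p 0 > 0}"
  have pole: "single_pole z F dbar" and K_cases: "\<And>p. p \<in> K \<Longrightarrow> poly p 0 > 0 \<or> p = z"
    unfolding F_def z_def K_def
    by (rule single_pole_gap_factors[OF graph ij(1,2) _ dbar_pos _ _ Is];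
        use a_pos distr stable Is_unique in \<open>auto simp: poly_gap_poly\<close>)+
  have z_K: "z \<in> K" using Is by (auto simp: z_def K_def gap_factors_def)
  interpret single_pole z F dbar by (rule pole)
  have rational: "\<And>f. pos_quotient f \<Longrightarrow> rational_form f dbar K"
    using z_K by (auto intro!: rational_form_if_pos_quotient simp: F_def)
  have inverse_factor: "pos_quotient (\<lambda>\<delta>. 1 / poly p \<delta>)" if "p \<in> K" for p
    using K_cases[OF that] that pos_quotient_inverse_factor pos_quotient_inverse_pole by (auto simp: F_def)
  have weight: "pos_quotient (\<lambda>\<delta>. a x + b x * \<delta>)" if "x \<in> {1..n}" for x
    by (rule pos_quotient_cong[OF pos_quotient_poly[of "[:a x, b x:]"]]) (use a_pos that in auto)
  have sum_T: "pos_quotient (\<lambda>\<delta>. \<Sum>I\<in>S. T_set H (\<lambda>i. a i + b i * \<delta>) I)"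
    and sum_E: "pos_quotient (\<lambda>\<delta>. \<Sum>I\<in>S. E_set H (\<lambda>i. a i + b i * \<delta>) I)"
    if H: "H \<in> {G, G'}" and S: "S \<subseteq> indep_sets {1..n} H" "S \<noteq> {}" for H S
  proof -
    have "graph_connected {1..n} H" using H conn graph_connected_add_edge by (auto simp: G'_def)
    then have nonempty: "\<And>J. J \<in> indep_sets {1..n} H \<Longrightarrow> nbrs H J \<noteq> {}"
      using nbrs_nonempty ij(1-3) by blast
    have vertices: "\<And>J. nbrs H J \<subseteq> {1..n}"
      using H nbrs_subset_vertices[OF graph] nbrs_add_edge_subset_vertices[OF graph ij(1,2)] by (auto simp: G'_def)
    have "\<And>J. J \<in> indep_sets {1..n} H \<Longrightarrow> gap_poly a b H J \<in> K"
      using H by (auto simp: G'_def K_def gap_factors_def)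
    then have inverse_gap: "\<And>J. J \<in> indep_sets {1..n} H \<Longrightarrow> pos_quotient
        (\<lambda>\<delta>. 1 / (msum (\<lambda>i. a i + b i * \<delta>) (nbrs H J) - msum (\<lambda>i. a i + b i * \<delta>) J))"
      using inverse_factor by (simp flip: poly_gap_poly)
    show "pos_quotient (\<lambda>\<delta>. \<Sum>I\<in>S. T_set H (\<lambda>i. a i + b i * \<delta>) I)"
      and "pos_quotient (\<lambda>\<delta>. \<Sum>I\<in>S. E_set H (\<lambda>i. a i + b i * \<delta>) I)"
      by (rule pos_quotient_sum_T_set[where V = "{1..n}"] pos_quotient_sum_E_set[where V = "{1..n}"];
          use weight vertices nonempty inverse_gap S in auto)+
  qed
  obtain k where k: "G istar k" using exists_neighbour[OF conn ij(1-3)] .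
  have "{istar} \<in> indep_sets {1..n} G'" "{istar} \<in> indep_sets {1..n} G" "{k} \<in> indep_sets {1..n} G"
    "k \<noteq> istar" "k \<noteq> jstar"
    using graph ij k unfolding simple_graph_def G'_def add_edge_def
    by (auto intro!: singleton_in_indep_sets)
  then show ?thesis
    unfolding Let_def G'_def[symmetric] K_def[unfolded gap_factors_def, folded G'_def, symmetric]
    by (intro conjI rational pos_quotient_add pos_quotient_const sum_T sum_E) auto
qed

end
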